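(* Assume $f\in C^{m+1}[-1,1]$ and $\max_{|x|\le1}|f^{(m+1)}(x)|\le A$ for a constant $A>0$ independent of $m$. For each arbitrary integration node $x_k\in[-1,1]$, let $\int_{-1}^{x_k}f(x)\,dx$ be approximated by the optimal barycentric Gegenbauer quadrature $\sum_{i=0}^m p_{OB,k,i}^{(1)}f(z_{m,k,i}^{(\alpha_k^* )})$. Then, as $m\to\infty$, the optimal barycentric Gegenbauer quadrature converges to the barycentric Chebyshev quadrature, in the sense that for every $k$, $$\sum_{i=0}^m p_{OB,k,i}^{(1)}\,f\big(z_{m,k,i}^{(\alpha_k^* )}\big)-\sum_{i=0}^m p_{B,k,i}^{(1)}\,f\big(x_{m,i}^{(0)}\big)\longrightarrow 0\quad(m\to\infty).$$
   Context: For $\alpha>-1/2$ and integer $n\ge0$, the Gegenbauer polynomial $G_n^{(\alpha)}$ is the Jacobi polynomial $P_n^{(\alpha-1/2,\alpha-1/2)}$ normalized so that $G_n^{(\alpha)}(1)=1$ (for $\alpha=0$ this is the Chebyshev polynomial $T_n$); $K_n^{(\alpha)}$ denotes its leading coefficient. For a node $x_k$, $\eta_{k,m}(\alpha)=\frac{2^m}{K_{m+1}^{(\alpha)}}\int_{-1}^{x_k}G_{m+1}^{(\alpha)}(x)\,dx$, $\alpha_k^*=\operatorname{argmin}_{\alpha>-1/2}\eta_{k,m}^2(\alpha)$, the adjoint GG nodes $z_{m,k,i}^{(\alpha_k^* )}$, $i=0,\dots,m$, are the zeros of $G_{m+1}^{(\alpha_k^* )}$, and $p_{OB,k,i}^{(1)}=\int_{-1}^{x_k}\ell_{k,i}(x)\,dx$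 with $\ell_{k,i}$ the degree-$m$ Lagrange basis polynomial at these nodes. The Chebyshev–Gauss nodes $x_{m,i}^{(0)}$, $i=0,\dots,m$, are the zeros of $T_{m+1}$, and $p_{B,k,i}^{(1)}=\int_{-1}^{x_k}\ell_i^{(0)}(x)\,dx$ with $\ell_i^{(0)}$ the degree-$m$ Lagrange basis polynomial at the Chebyshev–Gauss nodes. *)

theory Defs
  imports "HOL-Analysis.Analysis" "HOL-Computational_Algebra.Polynomial"
begin

definition jacobi_poly :: "real \<Rightarrow> real \<Rightarrow> nat \<Rightarrow> real poly" where
  "jacobi_poly a b n =
     (\<Sum>s\<le>n. smult (((real n + a) gchoose (n - s)) * ((real n + b) gchoose s))
                 ([:-1/2, 1/2:] ^ s * [:1/2, 1/2:] ^ (n - s)))"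

definition gegen :: "real \<Rightarrow> nat \<Rightarrow> real poly" where
  "gegen \<alpha> n = smult (1 / poly (jacobi_poly (\<alpha> - 1/2) (\<alpha> - 1/2) n) 1)
                      (jacobi_poly (\<alpha> - 1/2) (\<alpha> - 1/2) n)"

definition gegen_K :: "real \<Rightarrow> nat \<Rightarrow> real" where
  "gegen_K \<alpha> n = lead_coeff (gegen \<alpha> n)"

definition eta :: "real \<Rightarrow> nat \<Rightarrow> real \<Rightarrow> real" where
  "eta xk m \<alpha> = 2 ^ m / gegen_K \<alpha> (Suc m) * integral {-1..xk} (\<lambda>x. poly (gegen \<alpha> (Suc m)) x)"

definition gg_nodes :: "real \<Rightarrow> nat \<Rightarrow> real set" where
  "gg_nodes \<alpha> m = {x. poly (gegen \<alpha> (Suc m)) x = 0}"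

definition lagrange_basis :: "real set \<Rightarrow> real \<Rightarrow> real poly" where
  "lagrange_basis Z z = (\<Prod>w\<in>Z - {z}. smult (1 / (z - w)) [:-w, 1:])"

definition quad_weight :: "real set \<Rightarrow> real \<Rightarrow> real \<Rightarrow> real" where
  "quad_weight Z xk z = integral {-1..xk} (\<lambda>x. poly (lagrange_basis Z z) x)"

definition quad :: "real set \<Rightarrow> real \<Rightarrow> (real \<Rightarrow> real) \<Rightarrow> real" where
  "quad Z xk f = (\<Sum>z\<in>Z. quad_weight Z xk z * f z)"

end

theory Submission
  imports Defs
begin

(* Both quadratures are interpolatory: they integrate the Lagrange interpolant of f at m + 1 distinct
   nodes of [-1, 1].  For the GG nodes this holds because G_{m+1} is a multiple of a Jacobi polynomial
   P_{m+1}^{(a,a)} with a > -1, whose zeros are simple and interior: by Rodrigues' formula it is, up to a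
   positive factor, the (m+1)-st derivative of ((1 + x) (1 - x))^(m+1+a), and Rolle's theorem applied
   repeatedly produces m + 1 distinct zeros in (-1, 1).  The Cauchy remainder of Lagrange interpolation
   then bounds the error of either quadrature against the exact integral by 2 A 2^(m+1) / (m+1)!,
   which tends to 0. *)

lemma Rolle_many_zeros:
  fixes g g' :: "real \<Rightarrow> real"
  assumes "continuous_on {a..b} g"
    and "\<And>x. a < x \<Longrightarrow> x < b \<Longrightarrow> (g has_real_derivative g' x) (at x)"
    and "finite T" "T \<subseteq> {a..b}" "card T = Suc m" "\<And>t. t \<in> T \<Longrightarrow> g t = 0"
  obtains S where "finite S" "S \<subseteq> {a<..<b}" "card S = m" "\<And>s. s \<in> S \<Longrightarrow> g' s = 0"
  using assms
proof (induction m arbitrary: b T thesis)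
  case 0
  show ?case by (rule "0.prems"(1)[of "{}"]) auto
next
  case (Suc m)
  (* Split off the largest zero t; the remaining ones lie in [a, u] for the next largest zero u,
     and Rolle on [u, t] adds one more zero of g' to those found in (a, u) by induction. *)
  define t where "t = Max T"
  define T' where "T' = T - {t}"
  define u where "u = Max T'"
  have "T \<noteq> {}" using Suc.prems(6) by auto
  then have t: "t \<in> T" "t \<le> b" using Suc.prems(4,5) by (auto simp: t_def)
  have T': "finite T'" "card T' = Suc m" using Suc.prems(4,6) t by (auto simp: T'_def)
  then have "T' \<noteq> {}" by auto
  then have u: "u \<in> T'" "T' \<subseteq> {a..u}"
    using T'(1) Suc.prems(5) Max_in[of T'] Max_ge[of T'] by (auto simp: u_def T'_def subset_eq)
  have "u \<le> t" "u \<noteq> t"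
    using u(1) Suc.prems(4) by (auto simp: T'_def t_def)
  then have "u < t" by linarith
  obtain S' where S': "finite S'" "S' \<subseteq> {a<..<u}" "card S' = m" "\<And>s. s \<in> S' \<Longrightarrow> g' s = 0"
  proof (rule Suc.IH[where b=u and T=T'])
    show "continuous_on {a..u} g"
      by (rule continuous_on_subset[OF Suc.prems(2)]) (use \<open>u < t\<close> t(2) in auto)
  qed (use Suc.prems(3,7) u \<open>u < t\<close> t T' in \<open>auto simp: T'_def\<close>)
  have "a \<le> u" "t \<le> b" using u t(2) by auto
  have "\<exists>z. u < z \<and> z < t \<and> DERIV g z :> 0"
  proof (rule Rolle[OF \<open>u < t\<close>])
    show "g u = g t" using Suc.prems(7) u(1) t(1) by (simp add: T'_def)
    show "continuous_on {u..t} g"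
      by (rule continuous_on_subset[OF Suc.prems(2)]) (use \<open>a \<le> u\<close> \<open>t \<le> b\<close> in auto)
    fix x assume "u < x" "x < t"
    then show "g differentiable (at x)"
      using Suc.prems(3)[of x] \<open>a \<le> u\<close> \<open>t \<le> b\<close> real_differentiable_def by force
  qed
  then obtain z where z: "u < z" "z < t" "DERIV g z :> 0" by blast
  have "g' z = 0"
    using DERIV_unique[OF Suc.prems(3) z(3)] z \<open>a \<le> u\<close> \<open>t \<le> b\<close> by auto
  show ?case
  proof (rule Suc.prems(1)[of "insert z S'"])
    show "insert z S' \<subseteq> {a<..<b}" using S'(2) z \<open>a \<le> u\<close> \<open>t \<le> b\<close> by auto
    have "z \<notin> S'" using S'(2) z(1) by auto
    then show "card (insert z S') = Suc m" using S'(1,3) by simp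
  qed (use S' \<open>g' z = 0\<close> in auto)
qed

lemma higher_deriv_has_zero:
  fixes g :: "nat \<Rightarrow> real \<Rightarrow> real"
  assumes "\<And>j x. j < n \<Longrightarrow> x \<in> {a..b} \<Longrightarrow>
      (g j has_real_derivative g (Suc j) x) (at x within {a..b})"
    and "finite T" "T \<subseteq> {a..b}" "card T = Suc n" "\<And>t. t \<in> T \<Longrightarrow> g 0 t = 0"
  obtains \<xi> where "\<xi> \<in> {a..b}" "g n \<xi> = 0"
  using assms
proof (induction n arbitrary: g T thesis)
  case 0
  obtain t where "T = {t}" using "0.prems"(5) card_1_singletonE by auto
  then show ?case using "0.prems" by auto
next
  case (Suc n)
  have "continuous_on {a..b} (g 0)"
    by (rule DERIV_continuous_on) (use Suc.prems(2) in blast)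
  moreover have "(g 0 has_real_derivative g 1 x) (at x)" if "a < x" "x < b" for x
    using Suc.prems(2)[of 0 x] that by (simp add: at_within_Icc_at)
  ultimately obtain S where S: "finite S" "S \<subseteq> {a<..<b}" "card S = Suc n" "\<And>s. s \<in> S \<Longrightarrow> g 1 s = 0"
    using Rolle_many_zeros[of a b "g 0" "g 1" T "Suc n"] Suc.prems(3-6) by auto
  show ?case
  proof (rule Suc.IH[where g = "\<lambda>j. g (Suc j)" and T = S])
    show "\<xi> \<in> {a..b} \<Longrightarrow> g (Suc n) \<xi> = 0 \<Longrightarrow> thesis" for \<xi> by (rule Suc.prems(1))
  qed (use S Suc.prems(2) in auto)
qed

lemma Leibniz_has_real_derivative:
  fixes F G :: "nat \<Rightarrow> real \<Rightarrow> real"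
  assumes dF: "\<And>j. (F j has_real_derivative F (Suc j) x) (at x)"
    and dG: "\<And>j. (G j has_real_derivative G (Suc j) x) (at x)"
  shows "((\<lambda>y. \<Sum>s\<le>k. real (k choose s) * F s y * G (k - s) y) has_real_derivative
           (\<Sum>s\<le>Suc k. real (Suc k choose s) * F s x * G (Suc k - s) x)) (at x)"
proof -
  have d: "((\<lambda>y. \<Sum>s\<le>k. real (k choose s) * F s y * G (k-s) y) has_real_derivative
      (\<Sum>s\<le>k. real (k choose s) * (F (Suc s) x * G (k-s) x + F s x * G (Suc (k-s)) x))) (at x)"
    by (intro DERIV_sum DERIV_cmult[where f = "\<lambda>y. F _ y * G _ y", simplified mult.assoc[symmetric]]
        DERIV_mult'[OF dF dG, THEN DERIV_cong]) (simp add: algebra_simps)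
  have e1: "(\<Sum>s\<le>Suc k. real (Suc k choose s) * F s x * G (Suc k - s) x)
     = F 0 x * G (Suc k) x + (\<Sum>s\<le>k. real (k choose s) * F (Suc s) x * G (k - s) x)
        + (\<Sum>s\<le>k. real (k choose Suc s) * F (Suc s) x * G (k - s) x)"
    by (subst sum.atMost_Suc_shift) (simp add: sum.distrib algebra_simps)
  have e2: "(\<Sum>s\<le>k. real (k choose s) * F s x * G (Suc (k - s)) x)
     = F 0 x * G (Suc k) x + (\<Sum>s<k. real (k choose Suc s) * F (Suc s) x * G (Suc (k - Suc s)) x)"
  proof (cases k)
    case (Suc k')
    then show ?thesis by (simp only: atMost_Suc_eq_insert_0 lessThan_Suc_atMost) (simp add: sum.reindex)
  qed simp
  have e3: "(\<Sum>s\<le>k. real (k choose Suc s) * F (Suc s) x * G (k - s) x)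
      = (\<Sum>s<k. real (k choose Suc s) * F (Suc s) x * G (Suc (k - Suc s)) x)"
    by (simp add: lessThan_Suc_atMost[symmetric] Suc_diff_Suc)
  show ?thesis using d e1 e2 e3 by (simp add: algebra_simps sum.distrib)
qed

lemma DERIV_falling_factor_powr_plus:
  assumes "-1 < y"
  shows "((\<lambda>y. (\<Prod>i<j. r - real i) * (1 + y) powr (r - real j)) has_real_derivative
           (\<Prod>i<Suc j. r - real i) * (1 + y) powr (r - real (Suc j))) (at y)"
proof -
  have "((\<lambda>y. (1 + y) powr (r - real j)) has_real_derivative
          (r - real j) * (1 + y) powr (r - real j - 1) * 1) (at y)"
    by (rule DERIV_chain2[OF has_real_derivative_powr]) (use assms in \<open>auto intro!: derivative_eq_intros\<close>)
  from DERIV_cmult[OF this, of "\<Prod>i<j. r - real i"] show ?thesis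
    by (simp add: mult_ac diff_diff_eq add.commute)
qed

lemma DERIV_falling_factor_powr_minus:
  assumes "y < 1"
  shows "((\<lambda>y. (-1) ^ j * (\<Prod>i<j. r - real i) * (1 - y) powr (r - real j)) has_real_derivative
           (-1) ^ Suc j * (\<Prod>i<Suc j. r - real i) * (1 - y) powr (r - real (Suc j))) (at y)"
proof -
  have "((\<lambda>y. (1 - y) powr (r - real j)) has_real_derivative
          (r - real j) * (1 - y) powr (r - real j - 1) * (-1)) (at y)"
    by (rule DERIV_chain2[OF has_real_derivative_powr]) (use assms in \<open>auto intro!: derivative_eq_intros\<close>)
  from DERIV_cmult[OF this, of "(-1) ^ j * (\<Prod>i<j. r - real i)"] show ?thesis
    by (simp add: mult_ac diff_diff_eq add.commute)
qed

(* The k-th derivative of (1 + y)^(n+b) (1 - y)^(n+a), expanded by the Leibniz rule; for k = n it is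
   Rodrigues' formula for jacobi_poly a b n. *)
definition rodrigues_deriv :: "real \<Rightarrow> real \<Rightarrow> nat \<Rightarrow> nat \<Rightarrow> real \<Rightarrow> real" where
  "rodrigues_deriv a b n k y =
     (\<Sum>s\<le>k. real (k choose s) *
        ((\<Prod>i<s. real n + b - real i) * (1 + y) powr (real n + b - real s)) *
        ((-1) ^ (k - s) * (\<Prod>i<k - s. real n + a - real i) * (1 - y) powr (real n + a - real (k - s))))"

lemma rodrigues_deriv_has_real_derivative:
  assumes "-1 < y" "y < 1"
  shows "(rodrigues_deriv a b n k has_real_derivative rodrigues_deriv a b n (Suc k) y) (at y)"
  unfolding rodrigues_deriv_def[abs_def]
  by (rule Leibniz_has_real_derivative[of
        "\<lambda>s y. (\<Prod>i<s. real n + b - real i) * (1 + y) powr (real n + b - real s)" y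
        "\<lambda>j y. (-1) ^ j * (\<Prod>i<j. real n + a - real i) * (1 - y) powr (real n + a - real j)",
        OF DERIV_falling_factor_powr_plus[OF assms(1)] DERIV_falling_factor_powr_minus[OF assms(2)]])

lemma continuous_on_rodrigues_deriv:
  assumes "k < n" "a > -1" "b > -1"
  shows "continuous_on {-1..1} (rodrigues_deriv a b n k)"
proof -
  have plus: "continuous_on {-1..1} (\<lambda>y::real. (1 + y) powr e)" if "e > 0" for e :: real
    by (intro continuous_on_powr') (use that in \<open>auto intro!: continuous_intros\<close>)
  have minus: "continuous_on {-1..1} (\<lambda>y::real. (1 - y) powr e)" if "e > 0" for e :: real
    by (intro continuous_on_powr') (use that in \<open>auto intro!: continuous_intros\<close>)
  show ?thesis
    unfolding rodrigues_deriv_def[abs_def] using assms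
    by (intro continuous_on_sum continuous_on_mult continuous_on_const plus minus) auto
qed

lemma rodrigues_deriv_top_term:
  assumes y: "-1 < y" "y < 1" and "s \<le> n"
  shows "real (n choose s) *
        ((\<Prod>i<s. real n + b - real i) * (1 + y) powr (real n + b - real s)) *
        ((-1) ^ (n - s) * (\<Prod>i<n - s. real n + a - real i) * (1 - y) powr (real n + a - real (n - s)))
    = (-2) ^ n * fact n * (1 + y) powr b * (1 - y) powr a *
        (((real n + a) gchoose (n - s)) * ((real n + b) gchoose s) *
         (poly [:-1/2, 1/2:] y ^ s * poly [:1/2, 1/2:] y ^ (n - s)))"
  (is "?lhs = ?rhs")
proof -
  obtain t where n: "n = s + t" using \<open>s \<le> n\<close> le_Suc_ex by blast
  have falling: "(\<Prod>i<j. r - real i) = fact j * (r gchoose j)" for r :: real and j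
    by (simp add: gbinomial_mult_fact atLeast0LessThan)
  have fact_n: "real (n choose s) * fact s * fact t = fact n"
    using \<open>s \<le> n\<close> by (simp add: binomial_fact n)
  have powr_plus: "(1 + y) powr (real n + b - real s) = (1 + y) powr b * (1 + y) ^ t"
    using y by (simp add: n powr_add powr_realpow)
  have powr_minus: "(1 - y) powr (real n + a - real t) = (1 - y) powr a * (1 - y) ^ s"
    using y by (simp add: n powr_add powr_realpow)
  have sign: "(-1) ^ t * (1 - y) ^ s * (1 + y) ^ t =
      (-2) ^ n * (poly [:-1/2, 1/2:] y ^ s * poly [:1/2, 1/2:] y ^ t)"
  proof -
    have "(-1) ^ t * (1 - y) ^ s * (1 + y) ^ t = (1 - y) ^ s * (-(1 + y)) ^ t"
      by (simp only: power_minus[of "1 + y"] mult_ac)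
    also have "\<dots> = (-2 * poly [:-1/2, 1/2:] y) ^ s * (-2 * poly [:1/2, 1/2:] y) ^ t"
      by simp
    also have "\<dots> = (-2) ^ n * (poly [:-1/2, 1/2:] y ^ s * poly [:1/2, 1/2:] y ^ t)"
      by (simp only: n power_add power_mult_distrib mult_ac)
    finally show ?thesis .
  qed
  have "?lhs = (real (n choose s) * fact s * fact t) * ((real n + a) gchoose t) * ((real n + b) gchoose s) *
      (1 + y) powr b * (1 - y) powr a * ((-1) ^ t * (1 - y) ^ s * (1 + y) ^ t)"
    unfolding falling powr_plus[unfolded n] n diff_add_inverse powr_minus[unfolded n] by (simp only: mult_ac)
  also have "\<dots> = ?rhs"
    unfolding fact_n sign by (simp only: n diff_add_inverse mult_ac)
  finally show ?thesis .
qed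

lemma rodrigues_deriv_eq_jacobi_poly:
  assumes "-1 < y" "y < 1"
  shows "rodrigues_deriv a b n n y =
    (-2) ^ n * fact n * (1 + y) powr b * (1 - y) powr a * poly (jacobi_poly a b n) y"
  unfolding rodrigues_deriv_def jacobi_poly_def poly_sum poly_smult poly_mult poly_power sum_distrib_left
  by (intro sum.cong refl rodrigues_deriv_top_term[OF assms]) simp

lemma rodrigues_deriv_zeros:
  assumes "a > -1" "b > -1" "k \<le> n"
  obtains S where "finite S" "S \<subseteq> {-1<..<1}" "card S = k" "\<And>y. y \<in> S \<Longrightarrow> rodrigues_deriv a b n k y = 0"
  using assms(3)
proof (induction k arbitrary: thesis)
  case 0
  show ?case by (rule "0.prems"(1)[of "{}"]) auto
next
  case (Suc k)
  obtain S where S: "finite S" "S \<subseteq> {-1<..<1}" "card S = k" "\<And>y. y \<in> S \<Longrightarrow> rodrigues_deriv a b n k y = 0"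
    using Suc.IH Suc.prems(2) by auto
  (* For k < n the k-th derivative also vanishes at -1 and 1. *)
  define T where "T = insert (-1) (insert 1 S)"
  have "-1 \<notin> S" "1 \<notin> S" using S(2) by auto
  then have T: "finite T" "T \<subseteq> {-1..1}" "card T = Suc (Suc k)"
    using S(1-3) by (auto simp: T_def)
  have "rodrigues_deriv a b n k y = 0" if "y \<in> T" for y
    using that S(4) by (auto simp: T_def rodrigues_deriv_def)
  with T obtain S' where "finite S'" "S' \<subseteq> {-1<..<1}" "card S' = Suc k"
      "\<And>y. y \<in> S' \<Longrightarrow> rodrigues_deriv a b n (Suc k) y = 0"
    using Rolle_many_zeros[OF continuous_on_rodrigues_deriv rodrigues_deriv_has_real_derivative,
        of k n a b T "Suc k"] Suc.prems(2) assms(1,2) by auto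
  then show ?case by (rule Suc.prems(1))
qed

lemma poly_jacobi_poly_1: "poly (jacobi_poly a b n) 1 = (real n + a) gchoose n"
proof -
  have "poly (jacobi_poly a b n) 1 = (\<Sum>s\<le>n. if s = 0 then (real n + a) gchoose n else 0)"
    unfolding jacobi_poly_def poly_sum poly_smult poly_mult poly_power
    by (rule sum.cong[OF refl]) auto
  then show ?thesis by simp
qed

lemma poly_jacobi_poly_1_pos: "a > -1 \<Longrightarrow> poly (jacobi_poly a b n) 1 > 0"
  unfolding poly_jacobi_poly_1 gbinomial_pochhammer'
  by (intro divide_pos_pos pochhammer_pos) auto

lemma degree_jacobi_poly: "degree (jacobi_poly a b n) \<le> n"
  unfolding jacobi_poly_def
proof (intro degree_sum_le)
  fix s assume "s \<in> {..n}"
  have "degree ([:-1/2, 1/2:] ^ s * [:1/2, 1/2:] ^ (n - s) :: real poly) \<le> s + (n - s)"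
    by (intro order.trans[OF degree_mult_le] add_mono order.trans[OF degree_power_le]) auto
  then show "degree (smult (((real n + a) gchoose (n - s)) * ((real n + b) gchoose s))
                 ([:-1/2, 1/2:] ^ s * [:1/2, 1/2:] ^ (n - s))) \<le> n"
    using \<open>s \<in> {..n}\<close> by (intro order.trans[OF degree_smult_le]) auto
qed auto

lemma jacobi_poly_roots:
  assumes "a > -1" "b > -1"
  shows "{x. poly (jacobi_poly a b n) x = 0} \<subseteq> {-1<..<1}"
    and "card {x. poly (jacobi_poly a b n) x = 0} = n"
proof -
  let ?J = "jacobi_poly a b n"
  obtain S where S: "finite S" "S \<subseteq> {-1<..<1}" "card S = n" "\<And>y. y \<in> S \<Longrightarrow> rodrigues_deriv a b n n y = 0"
    using rodrigues_deriv_zeros[OF assms order.refl] by blast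
  have sub: "S \<subseteq> {x. poly ?J x = 0}"
  proof
    fix y assume "y \<in> S"
    then have "-1 < y" "y < 1" "rodrigues_deriv a b n n y = 0" using S(2,4) by auto
    then show "y \<in> {x. poly ?J x = 0}" using rodrigues_deriv_eq_jacobi_poly[of y a b n] by simp
  qed
  have "?J \<noteq> 0" using poly_jacobi_poly_1_pos[OF assms(1), of b n] by auto
  then have fin: "finite {x. poly ?J x = 0}" and "card {x. poly ?J x = 0} \<le> n"
    using poly_roots_finite card_poly_roots_bound[of ?J] degree_jacobi_poly[of a b n] by auto
  then have "S = {x. poly ?J x = 0}"
    using card_subset_eq[OF fin sub] card_mono[OF fin sub] S(3) by linarith
  with S(2,3) show "{x. poly ?J x = 0} \<subseteq> {-1<..<1}" "card {x. poly ?J x = 0} = n" by auto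
qed

lemma gg_nodes_interior_card:
  assumes "\<alpha> > -1/2"
  shows "finite (gg_nodes \<alpha> m)" "gg_nodes \<alpha> m \<subseteq> {-1<..<1}" "card (gg_nodes \<alpha> m) = Suc m"
proof -
  let ?J = "jacobi_poly (\<alpha> - 1/2) (\<alpha> - 1/2) (Suc m)"
  have "poly ?J 1 \<noteq> 0"
    using poly_jacobi_poly_1_pos[of "\<alpha> - 1/2" "\<alpha> - 1/2" "Suc m"] assms by simp
  then have "gg_nodes \<alpha> m = {x. poly ?J x = 0}"
    by (simp add: gg_nodes_def gegen_def)
  then show "gg_nodes \<alpha> m \<subseteq> {-1<..<1}" "card (gg_nodes \<alpha> m) = Suc m"
    using jacobi_poly_roots[of "\<alpha> - 1/2" "\<alpha> - 1/2" "Suc m"] assms by auto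
  then show "finite (gg_nodes \<alpha> m)" by (simp add: card_ge_0_finite)
qed

lemma higher_pderiv_eq_0:
  fixes p :: "'a::{idom,semiring_char_0} poly"
  assumes "degree p < n"
  shows "(pderiv ^^ n) p = 0"
proof -
  have "degree ((pderiv ^^ n) p) = 0" using assms by (simp add: degree_higher_pderiv)
  moreover have "coeff ((pderiv ^^ n) p) 0 = 0"
    using assms by (simp add: coeff_higher_pderiv coeff_eq_0)
  ultimately show ?thesis by (metis degree_0_id pCons_0_0)
qed

lemma higher_pderiv_degree:
  fixes p :: "'a::{idom,semiring_char_0} poly"
  assumes "degree p = n"
  shows "(pderiv ^^ n) p = [:fact n * lead_coeff p:]"
proof -
  have "degree ((pderiv ^^ n) p) = 0" by (simp add: degree_higher_pderiv assms)
  moreover have "coeff ((pderiv ^^ n) p) 0 = fact n * lead_coeff p"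
    using assms by (simp add: coeff_higher_pderiv pochhammer_fact)
  ultimately show ?thesis by (metis degree_0_id)
qed

definition node_poly :: "real set \<Rightarrow> real poly" where
  "node_poly Z = (\<Prod>z\<in>Z. [:-z, 1:])"

lemma poly_node_poly: "poly (node_poly Z) x = (\<Prod>z\<in>Z. x - z)"
  by (simp add: node_poly_def poly_prod)

lemma degree_node_poly: "finite Z \<Longrightarrow> degree (node_poly Z) = card Z"
  unfolding node_poly_def by (subst degree_prod_sum_eq) auto

lemma lead_coeff_node_poly: "lead_coeff (node_poly Z) = 1"
  by (simp add: node_poly_def lead_coeff_prod)

lemma abs_poly_node_poly_le:
  assumes "Z \<subseteq> {a..b}" "x \<in> {a..b}"
  shows "\<bar>poly (node_poly Z) x\<bar> \<le> (b - a) ^ card Z"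
proof -
  have "\<bar>poly (node_poly Z) x\<bar> = (\<Prod>z\<in>Z. \<bar>x - z\<bar>)"
    by (simp add: poly_node_poly abs_prod)
  also have "\<dots> \<le> (\<Prod>z\<in>Z. b - a)"
    using assms by (intro prod_mono) (auto simp: subset_eq)
  finally show ?thesis by simp
qed

lemma poly_lagrange_basis:
  assumes "finite Z" "z \<in> Z" "w \<in> Z"
  shows "poly (lagrange_basis Z z) w = (if w = z then 1 else 0)"
proof (cases "w = z")
  case True
  then show ?thesis
    by (auto simp: lagrange_basis_def poly_prod diff_divide_distrib[symmetric] intro!: prod.neutral)
next
  case False
  then have "w \<in> Z - {z}" using assms(3) by simp
  then show ?thesis
    using False assms(1) by (auto simp: lagrange_basis_def poly_prod intro!: prod_zero)
qed

lemma degree_lagrange_basis: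
  assumes "finite Z" "z \<in> Z"
  shows "degree (lagrange_basis Z z) \<le> card Z - 1"
proof -
  have "finite (Z - {z})" using assms(1) by simp
  then have "degree (lagrange_basis Z z) \<le> (\<Sum>w\<in>Z - {z}. degree (smult (1 / (z - w)) [:-w, 1:]))"
    unfolding lagrange_basis_def
    by (rule degree_prod_sum_le[where f = "\<lambda>w. smult (1 / (z - w)) [:-w, 1:]", unfolded o_def])
  also have "\<dots> \<le> (\<Sum>w\<in>Z - {z}. 1)"
    by (intro sum_mono order.trans[OF degree_smult_le]) simp
  finally show ?thesis using assms by simp
qed

definition lagrange_interp :: "real set \<Rightarrow> (real \<Rightarrow> real) \<Rightarrow> real poly" where
  "lagrange_interp Z f = (\<Sum>z\<in>Z. smult (f z) (lagrange_basis Z z))"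

lemma poly_lagrange_interp: "finite Z \<Longrightarrow> w \<in> Z \<Longrightarrow> poly (lagrange_interp Z f) w = f w"
  by (simp add: lagrange_interp_def poly_sum poly_lagrange_basis if_distrib cong: if_cong)

lemma degree_lagrange_interp: "finite Z \<Longrightarrow> degree (lagrange_interp Z f) \<le> card Z - 1"
  unfolding lagrange_interp_def
  by (intro degree_sum_le order.trans[OF degree_smult_le] degree_lagrange_basis) auto

lemma lagrange_interp_error:
  fixes f :: "real \<Rightarrow> real" and Df :: "nat \<Rightarrow> real \<Rightarrow> real"
  assumes Df0: "Df 0 = f"
    and Df: "\<And>j x. j \<le> n \<Longrightarrow> x \<in> {a..b} \<Longrightarrow>
      (Df j has_real_derivative Df (Suc j) x) (at x within {a..b})"
    and Z: "finite Z" "Z \<subseteq> {a..b}" "card Z = Suc n"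
    and x: "x \<in> {a..b}"
  obtains \<xi> where "\<xi> \<in> {a..b}"
    "f x - poly (lagrange_interp Z f) x = Df (Suc n) \<xi> / fact (Suc n) * poly (node_poly Z) x"
proof (cases "x \<in> Z")
  case True
  then have "poly (node_poly Z) x = 0" "poly (lagrange_interp Z f) x = f x"
    using Z(1) by (auto simp: poly_node_poly poly_lagrange_interp intro!: prod_zero)
  then show ?thesis using that x by auto
next
  case False
  define p where "p = lagrange_interp Z f"
  define \<omega> where "\<omega> = node_poly Z"
  have "poly \<omega> x \<noteq> 0" using Z(1) False by (simp add: \<omega>_def poly_node_poly)
  define K where "K = (f x - poly p x) / poly \<omega> x"
  (* g 0 = f - p - K \<omega> vanishes at the n + 2 points of insert x Z, so by Rolle g (Suc n) has a zero;
     there the polynomial parts reduce to the constant K (n + 1)!. *)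
  define g where "g j t = Df j t - poly ((pderiv ^^ j) p) t - K * poly ((pderiv ^^ j) \<omega>) t" for j t
  have "(g j has_real_derivative g (Suc j) t) (at t within {a..b})"
    if "j < Suc n" "t \<in> {a..b}" for j t
    unfolding g_def using that
    by (auto intro!: derivative_eq_intros Df poly_DERIV[THEN has_field_derivative_at_within]
        simp: algebra_simps)
  moreover have "finite (insert x Z)" "insert x Z \<subseteq> {a..b}" "card (insert x Z) = Suc (Suc n)"
    using Z x False by auto
  moreover have "g 0 t = 0" if "t \<in> insert x Z" for t
    using that Z(1) \<open>poly \<omega> x \<noteq> 0\<close>
    by (auto simp: g_def Df0 K_def p_def \<omega>_def poly_lagrange_interp poly_node_poly intro!: prod_zero)
  ultimately obtain \<xi> where \<xi>: "\<xi> \<in> {a..b}" "g (Suc n) \<xi> = 0"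
    by (rule higher_deriv_has_zero)
  have "(pderiv ^^ Suc n) p = 0"
    using degree_lagrange_interp[OF Z(1), of f] Z(3) by (intro higher_pderiv_eq_0) (simp add: p_def)
  moreover have "(pderiv ^^ Suc n) \<omega> = [:fact (Suc n) * lead_coeff \<omega>:]"
    using Z by (intro higher_pderiv_degree) (simp add: \<omega>_def degree_node_poly)
  ultimately have "K = Df (Suc n) \<xi> / fact (Suc n)"
    using \<xi>(2) by (simp add: g_def \<omega>_def lead_coeff_node_poly)
  then show ?thesis
    using that[OF \<xi>(1)] \<open>poly \<omega> x \<noteq> 0\<close> by (simp add: K_def p_def \<omega>_def field_simps)
qed

lemma quad_eq_integral_lagrange_interp:
  assumes "finite Z"
  shows "quad Z xk f = integral {-1..xk} (poly (lagrange_interp Z f))"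
proof -
  have "poly (lagrange_interp Z f) = (\<lambda>x. \<Sum>z\<in>Z. f z * poly (lagrange_basis Z z) x)"
    by (simp add: lagrange_interp_def poly_sum fun_eq_iff)
  then have "integral {-1..xk} (poly (lagrange_interp Z f))
      = integral {-1..xk} (\<lambda>x. \<Sum>z\<in>Z. f z * poly (lagrange_basis Z z) x)"
    by simp
  also have "\<dots> = (\<Sum>z\<in>Z. f z * integral {-1..xk} (poly (lagrange_basis Z z)))"
    using assms by (subst integral_sum) (auto intro!: integrable_continuous_interval continuous_intros)
  finally show ?thesis by (simp add: quad_def quad_weight_def mult.commute)
qed

lemma quad_error:
  fixes f :: "real \<Rightarrow> real" and Df :: "nat \<Rightarrow> real \<Rightarrow> real"
  assumes Df0: "Df 0 = f"
    and Df: "\<And>j x. j \<le> m \<Longrightarrow> x \<in> {-1..1} \<Longrightarrow>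
      (Df j has_real_derivative Df (Suc j) x) (at x within {-1..1})"
    and bound: "\<And>x. x \<in> {-1..1} \<Longrightarrow> \<bar>Df (Suc m) x\<bar> \<le> A"
    and Z: "finite Z" "Z \<subseteq> {-1..1}" "card Z = Suc m"
    and xk: "xk \<in> {-1..1}"
  shows "\<bar>integral {-1..xk} f - quad Z xk f\<bar> \<le> 2 * A * 2 ^ Suc m / fact (Suc m)"
proof -
  define p where "p = lagrange_interp Z f"
  define B where "B = A * 2 ^ Suc m / fact (Suc m)"
  have "0 \<le> A" using bound[of 0] by auto
  have "continuous_on {-1..1} f"
    using Df[of 0] Df0 by (intro DERIV_continuous_on) auto
  then have "continuous_on {-1..xk} f"
    by (rule continuous_on_subset) (use xk in auto)
  then have f_cont: "continuous_on {-1..xk} (\<lambda>x. f x - poly p x)"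
    by (intro continuous_intros)
  have pointwise: "\<bar>f x - poly p x\<bar> \<le> B" if "x \<in> {-1..xk}" for x
  proof -
    have x: "x \<in> {-1..1}" using that xk by auto
    obtain \<xi> where \<xi>: "\<xi> \<in> {-1..1}"
      "f x - poly p x = Df (Suc m) \<xi> / fact (Suc m) * poly (node_poly Z) x"
      using lagrange_interp_error[OF Df0 Df Z x] unfolding p_def by blast
    have "\<bar>f x - poly p x\<bar> = \<bar>Df (Suc m) \<xi>\<bar> / fact (Suc m) * \<bar>poly (node_poly Z) x\<bar>"
      using \<xi>(2) by (simp add: abs_mult)
    also have "\<dots> \<le> A / fact (Suc m) * 2 ^ Suc m"
      using bound[OF \<xi>(1)] abs_poly_node_poly_le[OF Z(2) x] Z(3) \<open>0 \<le> A\<close>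
      by (intro mult_mono divide_right_mono) auto
    finally show ?thesis by (simp add: B_def)
  qed
  have "integral {-1..xk} f - quad Z xk f = integral {-1..xk} (\<lambda>x. f x - poly p x)"
    using \<open>continuous_on {-1..xk} f\<close> unfolding quad_eq_integral_lagrange_interp[OF Z(1)] p_def
    by (subst integral_diff) (auto intro!: integrable_continuous_interval continuous_intros)
  also have "\<bar>\<dots>\<bar> \<le> B * (xk - -1)"
    using integral_bound[of "-1" xk "\<lambda>x. f x - poly p x" B] xk f_cont pointwise by auto
  also have "\<dots> \<le> B * 2"
    using xk \<open>0 \<le> A\<close> by (intro mult_left_mono) (auto simp: B_def)
  finally show ?thesis by (simp add: B_def)
qed

theorem theorem8:
  fixes f :: "real \<Rightarrow> real" and Df :: "nat \<Rightarrow> real \<Rightarrow> real"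
    and A xk :: real and astar :: "nat \<Rightarrow> real"
  assumes "A > 0"
    and "Df 0 = f"
    and "\<And>n. continuous_on {-1..1} (Df n)"
    and "\<And>n x. x \<in> {-1..1} \<Longrightarrow> (Df n has_real_derivative Df (Suc n) x) (at x within {-1..1})"
    and "\<And>m x. x \<in> {-1..1} \<Longrightarrow> \<bar>Df (Suc m) x\<bar> \<le> A"
    and "xk \<in> {-1..1}"
    and "\<And>m. astar m > -1/2"
    and "\<And>m \<alpha>. \<alpha> > -1/2 \<Longrightarrow> (eta xk m (astar m))\<^sup>2 \<le> (eta xk m \<alpha>)\<^sup>2"
  shows "(\<lambda>m. quad (gg_nodes (astar m) m) xk f - quad (gg_nodes 0 m) xk f) \<longlonglongrightarrow> 0"
proof -
  define \<epsilon> where "\<epsilon> m = 2 * A * 2 ^ Suc m / fact (Suc m)" for m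
  have error: "\<bar>integral {-1..xk} f - quad (gg_nodes \<alpha> m) xk f\<bar> \<le> \<epsilon> m" if "\<alpha> > -1/2" for \<alpha> m
    unfolding \<epsilon>_def
    by (rule quad_error[where Df = Df]) (use assms(2,4-6) gg_nodes_interior_card[OF that, of m] in fastforce)+
  have bound: "norm (quad (gg_nodes (astar m) m) xk f - quad (gg_nodes 0 m) xk f) \<le> 2 * \<epsilon> m" for m
    using error[of "astar m" m, OF assms(7)] error[of 0 m] by simp
  have lim: "(\<lambda>m. 2 * \<epsilon> m) \<longlonglongrightarrow> 0"
  proof -
    have "(\<lambda>m. 2 ^ Suc m / fact (Suc m) :: real) \<longlonglongrightarrow> 0"
      unfolding divide_inverse_commute by (rule LIMSEQ_Suc[OF summable_LIMSEQ_zero[OF summable_exp]])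
    then have "(\<lambda>m. 2 * (2 * A * (2 ^ Suc m / fact (Suc m)))) \<longlonglongrightarrow> 0"
      by (intro tendsto_mult_right_zero)
    then show ?thesis by (simp only: \<epsilon>_def times_divide_eq_right)
  qed
  show ?thesis
    by (rule Lim_null_comparison[OF always_eventually lim]) (use bound in blast)
qed

end
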